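(* Let $I$ be a nonempty finite set. The antipode $s_I$ of the Hopf monoid $\mathbb I(\mathbf{GP}^+)$ satisfies, for every extended generalized permutahedron $P\subseteq\mathbb R^I$, $$s_I(\mathbb 1_P)=(-1)^{|I|-\dim P}\,\mathbb 1_{P^\circ},$$ where $P^\circ$ is the relative interior of $P$ (and $\mathbb 1_{P^\circ}$ lies in $\mathbb I(\mathbf{GP}^+)[I]$).
   Context: $\mathbf{GP}^+$ is the Hopf monoid of extended generalized permutahedra: $\mathbf{GP}^+[I]$ has basis the polyhedra $P=\{x\in\mathbb R^I:\sum_{i\in I}x_i=z(I),\ \sum_{i\in A}x_i\le z(A)\ \forall A\subseteq I\}$ with $z:2^I\to\mathbb R\cup\{\infty\}$ submodular on its finite values and $z(I)$ finite; product $P\cdot Q=P\times Q$; coproduct $\Delta_{S,T}(P)=P|_S\otimes P/_S$ where $P|_S\times P/_S$ is the face of $P$ maximizing $\sum_{i\in S}x_i$ if this functional is bounded above on $P$, and $0$ otherwise. $\mathbb I(\mathbf{GP}^+)[I]$ is the span of indicator functions $\mathbb 1_P$ of such $P$, which is the quotient Hopf monoid $\mathbf{GP}^+/\ker(P\mapsto\mathbb 1_P)$ with the induced product and coproduct. The antipode of a connected Hopf monoid is given for $I\ne\emptyset$ by $s_I(x)=\sum_{k\ge1}\sum_{(S_1,\dots,S_k)}(-1)^k\,m_{S_1,\dots,S_k}\circ\Delta_{S_1,\dots,S_k}(x)$, summing over ordered set partitions of $I$ into nonempty blocks. *)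

theory Defs
  imports "HOL-Analysis.Analysis"
begin

text \<open>The ground set I is the universe of a finite type 'n; R^I is real^'n.\<close>

text \<open>z : 2^I -> R \<union> {\<infinity>}, submodular (in extended arithmetic, i.e. the
  inequality is required whenever z A and z B are finite), with z(I) finite.\<close>
definition ext_submodular :: "('n::finite set \<Rightarrow> ereal) \<Rightarrow> bool" where
  "ext_submodular z \<longleftrightarrow>
     (\<forall>A. z A \<noteq> -\<infinity>) \<and> z UNIV \<noteq> \<infinity> \<and>
     (\<forall>A B. z (A \<union> B) + z (A \<inter> B) \<le> z A + z B)"

definition GP_of :: "('n::finite set \<Rightarrow> ereal) \<Rightarrow> (real^'n) set" where
  "GP_of z = {x. ereal (\<Sum>i\<in>UNIV. x $ i) = z UNIV \<and>
                 (\<forall>A. ereal (\<Sum>i\<in>A. x $ i) \<le> z A)}"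

definition is_ext_GP :: "(real^'n::finite) set \<Rightarrow> bool" where
  "is_ext_GP P \<longleftrightarrow> (\<exists>z. ext_submodular z \<and> P = GP_of z)"

text \<open>Coproduct Delta_{S,T}: the face P|_S x P/_S of P maximizing sum_{i in S} x_i
  (as a subset of R^I = R^S x R^T), or 0 (represented by the empty set, whose
  indicator is the zero function) if that functional is unbounded above.\<close>
definition max_face :: "'n::finite set \<Rightarrow> (real^'n) set \<Rightarrow> (real^'n) set" where
  "max_face S F =
     (if F \<noteq> {} \<and> bdd_above ((\<lambda>x. \<Sum>i\<in>S. x $ i) ` F)
      then {x\<in>F. \<forall>y\<in>F. (\<Sum>i\<in>S. y $ i) \<le> (\<Sum>i\<in>S. x $ i)}
      else {})"

text \<open>m_{S_1,...,S_k} o Delta_{S_1,...,S_k}(P), as a subset of R^I (empty = 0).\<close>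
fun lex_face :: "'n::finite set list \<Rightarrow> (real^'n) set \<Rightarrow> (real^'n) set" where
  "lex_face [] F = F"
| "lex_face (S # Ss) F = lex_face Ss (max_face S F)"

definition ordered_set_partitions :: "'a set \<Rightarrow> 'a set list set" where
  "ordered_set_partitions I =
     {Ss. (\<forall>S\<in>set Ss. S \<noteq> {}) \<and>
          (\<forall>i<length Ss. \<forall>j<length Ss. i \<noteq> j \<longrightarrow> Ss ! i \<inter> Ss ! j = {}) \<and>
          \<Union>(set Ss) = I}"

text \<open>Antipode of I(GP+) on 1_P via the Takeuchi formula, as a function on R^I:
  s_I(1_P) = sum over ordered set partitions (-1)^k 1_{m o Delta_{S_1..S_k}(P)}.\<close>
definition GP_antipode :: "(real^'n::finite) set \<Rightarrow> (real^'n) \<Rightarrow> int" where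
  "GP_antipode P = (\<lambda>x. \<Sum>Ss\<in>ordered_set_partitions (UNIV::'n set).
       (-1) ^ length Ss * indicator (lex_face Ss P) x)"

end

(*
  Fix y in P. The face of P selected by an ordered set partition S_1, ..., S_k is cut out
  by maximizing the coordinate sums over the prefix unions S_1 u ... u S_j, and y maximizes
  the coordinate sum over S exactly when S is empty, everything, or tight at y. Tight sets
  are closed under union and intersection, so the sets V for which y maximizes the sum over
  the complement of V form a lattice M, and the value of the antipode at y is Philip Hall's
  alternating chain count of M, i.e. its Moebius function mu({}, I). This is (-1)^r when M
  is Boolean of rank r and 0 otherwise. M is Boolean exactly when every face through y is
  all of P, i.e. when y lies in the relative interior of P, and then the linear span of the
  indicator vectors of M has dimension r = |I| - dim P.
*)
theory Submission
  imports Defs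
begin

section \<open>Moebius functions of lattices of sets\<close>

definition indicator_vec :: "'n::finite set \<Rightarrow> real^'n" where
  "indicator_vec V = (\<chi> i. indicator V i)"

lemma indicator_vec_Un:
  "V \<inter> A = {} \<Longrightarrow> indicator_vec (V \<union> A) = indicator_vec V + indicator_vec A"
  by (auto simp: indicator_vec_def vec_eq_iff indicator_def)

lemma indicator_vec_empty: "indicator_vec {} = 0"
  by (simp add: indicator_vec_def vec_eq_iff)

lemma indicator_vec_notin_span:
  assumes "i \<in> A" "\<forall>V\<in>Y. i \<notin> V"
  shows "indicator_vec A \<notin> span (indicator_vec ` Y)"
proof
  assume "indicator_vec A \<in> span (indicator_vec ` Y)"
  moreover have "span (indicator_vec ` Y) \<subseteq> {x. x $ i = 0}"
    using assms(2) by (intro span_minimal) (auto simp: subspace_def indicator_vec_def)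
  ultimately show False
    using assms(1) by (auto simp: indicator_vec_def)
qed

locale set_lattice =
  fixes M :: "'n::finite set set"
  assumes empty_mem: "{} \<in> M"
    and Un_mem: "A \<in> M \<Longrightarrow> B \<in> M \<Longrightarrow> A \<union> B \<in> M"
    and Int_mem: "A \<in> M \<Longrightarrow> B \<in> M \<Longrightarrow> A \<inter> B \<in> M"
begin

definition atom :: "'n set \<Rightarrow> bool" where
  "atom A \<longleftrightarrow> A \<in> M \<and> A \<noteq> {} \<and> (\<forall>B\<in>M. B \<subseteq> A \<longrightarrow> B = {} \<or> B = A)"

definition boolean_below :: "'n set \<Rightarrow> bool" where
  "boolean_below W \<longleftrightarrow> (\<forall>V\<in>M. V \<subseteq> W \<longrightarrow> W - V \<in> M)"

text \<open>When \<open>[{}, W]\<close> is Boolean this is the number of atoms below \<open>W\<close>; measuring it as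
  a dimension lets it be compared with \<open>aff_dim\<close> later.\<close>
definition rank_below :: "'n set \<Rightarrow> nat" where
  "rank_below W = dim (indicator_vec ` {V\<in>M. V \<subseteq> W})"

lemma atom_below:
  assumes "W \<in> M" "W \<noteq> {}"
  obtains A where "atom A" "A \<subseteq> W"
proof -
  let ?C = "{V\<in>M. V \<noteq> {} \<and> V \<subseteq> W}"
  obtain A where A: "A \<in> ?C" and min: "\<And>B. B \<in> ?C \<Longrightarrow> B \<subseteq> A \<Longrightarrow> A = B"
    using finite_has_minimal[of ?C] assms by auto
  then have "atom A"
    unfolding atom_def by blast
  with A that show thesis by blast
qed

lemma atom_disjoint_or_subset:
  assumes "atom A" "V \<in> M"
  shows "V \<inter> A = {} \<or> A \<subseteq> V"
  using assms Int_mem[of V A] unfolding atom_def by blast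

lemma span_indicator_vecs_remove_atom:
  assumes A: "atom A" "A \<subseteq> W" and WA: "W - A \<in> M"
  shows "span (indicator_vec ` {V\<in>M. V \<subseteq> W}) =
    span (insert (indicator_vec A) (indicator_vec ` {V\<in>M. V \<subseteq> W - A}))"
    (is "span ?X = span ?Z")
proof -
  have "indicator_vec V \<in> span ?Z" if V: "V \<in> M" "V \<subseteq> W" for V
  proof -
    have "V \<inter> (W - A) \<in> M" using Int_mem V WA by blast
    then have in_Z: "indicator_vec (V \<inter> (W - A)) \<in> span ?Z"
      by (intro span_base) blast
    show ?thesis
    proof (cases "A \<subseteq> V")
      case True
      then have "V \<inter> (W - A) \<union> A = V" using V by blast
      moreover have "V \<inter> (W - A) \<inter> A = {}" by blast
      ultimately have "indicator_vec V = indicator_vec (V \<inter> (W - A)) + indicator_vec A"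
        using indicator_vec_Un by metis
      then show ?thesis
        using in_Z span_base[of "indicator_vec A" ?Z] span_add by fastforce
    next
      case False
      then have "V \<inter> (W - A) = V" using V atom_disjoint_or_subset[OF A(1) V(1)] by blast
      then show ?thesis using in_Z by simp
    qed
  qed
  then have "?X \<subseteq> span ?Z" by blast
  moreover have "A \<in> M" using A(1) unfolding atom_def by blast
  then have "?Z \<subseteq> ?X" using A(2) by auto
  then have "?Z \<subseteq> span ?X"
    using span_superset by (rule subset_trans)
  ultimately show ?thesis
    unfolding span_eq by (rule conjI)
qed

lemma rank_below_remove_atom:
  assumes A: "atom A" "A \<subseteq> W" and WA: "W - A \<in> M"
  shows "rank_below W = rank_below (W - A) + 1"
proof -
  let ?Y = "indicator_vec ` {V\<in>M. V \<subseteq> W - A}"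
  have "rank_below W = dim (span (insert (indicator_vec A) ?Y))"
    unfolding rank_below_def span_indicator_vecs_remove_atom[OF A WA, symmetric] by (simp only: dim_span)
  also have "\<dots> = dim ?Y + 1"
  proof -
    obtain i where "i \<in> A" using A unfolding atom_def by blast
    then have "indicator_vec A \<notin> span ?Y"
      by (intro indicator_vec_notin_span) auto
    then show ?thesis by (simp add: dim_span dim_insert)
  qed
  finally show ?thesis unfolding rank_below_def .
qed

lemma boolean_below_remove_atom:
  assumes A: "atom A" "A \<subseteq> W" and WA: "W - A \<in> M"
  shows "boolean_below W \<longleftrightarrow> boolean_below (W - A)"
proof
  assume B: "boolean_below W"
  show "boolean_below (W - A)"
    unfolding boolean_below_def
  proof (intro ballI impI)
    fix V assume V: "V \<in> M" "V \<subseteq> W - A"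
    then have "W - V \<in> M" using B unfolding boolean_below_def by blast
    then have "(W - V) \<inter> (W - A) \<in> M" using Int_mem WA by blast
    moreover have "(W - V) \<inter> (W - A) = W - A - V" by blast
    ultimately show "W - A - V \<in> M" by (simp only:)
  qed
next
  assume B: "boolean_below (W - A)"
  have A_in: "A \<in> M" using A(1) unfolding atom_def by blast
  show "boolean_below W"
    unfolding boolean_below_def
  proof (intro ballI impI)
    fix V assume V: "V \<in> M" "V \<subseteq> W"
    have "W - A - V \<inter> (W - A) \<in> M"
      by (rule B[unfolded boolean_below_def, rule_format, OF Int_mem[OF V(1) WA]]) blast
    moreover have "W - A - V \<inter> (W - A) = W - A - V" by blast
    ultimately have WAV: "W - A - V \<in> M" by (simp only:)
    show "W - V \<in> M"
    proof (cases "A \<subseteq> V")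
      case True
      then have "W - V = W - A - V" by blast
      with WAV show ?thesis by (simp only:)
    next
      case False
      then have "W - V = (W - A - V) \<union> A"
        using atom_disjoint_or_subset[OF A(1) V(1)] A(2) by blast
      with WAV A_in Un_mem show ?thesis by (simp only:)
    qed
  qed
qed

context
  fixes F :: "'n set \<Rightarrow> int"
  assumes F_off: "\<And>V. V \<notin> M \<Longrightarrow> F V = 0"
    and F_sum: "\<And>W. W \<in> M \<Longrightarrow> W \<noteq> {} \<Longrightarrow> (\<Sum>V\<in>Pow W. F V) = 0"
begin

text \<open>Members of \<open>M\<close> below \<open>V \<union> A\<close> lie below \<open>V\<close> or contain \<open>A\<close>, so the recursion at
  \<open>V \<union> A\<close> pairs \<open>U\<close> with \<open>U \<union> A\<close>, and by induction all pairs but the top one cancel.\<close>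
lemma mobius_add_atom:
  assumes A: "atom A" and VA: "V \<inter> A = {}"
  shows "F (V \<union> A) = - F V"
  using finite[of V] VA
proof (induction V rule: finite_psubset_induct)
  case (psubset V)
  show ?case
  proof (cases "V \<union> A \<in> M")
    case False
    then have "V \<notin> M" using A Un_mem unfolding atom_def by blast
    with False show ?thesis by (simp add: F_off)
  next
    case True
    have A_ne: "A \<noteq> {}" using A unfolding atom_def by blast
    let ?AV = "(\<lambda>U. U \<union> A) ` Pow V"
    have inj: "inj_on (\<lambda>U. U \<union> A) (Pow V)"
      using psubset.prems by (auto simp: inj_on_def)
    have "F U = 0" if U: "U \<in> Pow (V \<union> A) - (Pow V \<union> ?AV)" for U
    proof -
      have "U \<inter> A \<noteq> {}" using U by blast
      moreover have "\<not> A \<subseteq> U"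
      proof
        assume "A \<subseteq> U"
        then have "U \<in> ?AV" using U by (intro image_eqI[of _ _ "U - A"]) auto
        then show False using U by blast
      qed
      ultimately show "F U = 0" using atom_disjoint_or_subset[OF A] F_off by blast
    qed
    then have "(\<Sum>U\<in>Pow (V \<union> A). F U) = (\<Sum>U\<in>Pow V \<union> ?AV. F U)"
      by (intro sum.mono_neutral_right) auto
    also have "\<dots> = (\<Sum>U\<in>Pow V. F U) + (\<Sum>U\<in>?AV. F U)"
      using psubset.prems A_ne by (intro sum.union_disjoint) auto
    also have "\<dots> = (\<Sum>U\<in>Pow V. F U + F (U \<union> A))"
      by (simp add: sum.reindex[OF inj] sum.distrib)
    also have "\<dots> = F V + F (V \<union> A)"
    proof -
      have "F U + F (U \<union> A) = 0" if "U \<in> Pow V - {V}" for U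
      proof -
        have "U \<subset> V" "U \<inter> A = {}" using that psubset.prems by auto
        then show ?thesis using psubset.IH by simp
      qed
      then show ?thesis
        by (simp add: sum.remove[of "Pow V" V])
    qed
    finally show ?thesis using F_sum[OF True] A_ne by simp
  qed
qed

lemma mobius_closed_form:
  assumes F_empty: "F {} = 1" and W: "W \<in> M"
  shows "F W = (if boolean_below W then (-1) ^ rank_below W else 0)"
  using finite[of W] W
proof (induction W rule: finite_psubset_induct)
  case (psubset W)
  show ?case
  proof (cases "W = {}")
    case True
    have "{V\<in>M. V \<subseteq> {}} = {{}}" using empty_mem by auto
    then have "rank_below {} = 0"
      by (simp add: rank_below_def indicator_vec_empty)
    moreover have "boolean_below {}" unfolding boolean_below_def using empty_mem by auto
    ultimately show ?thesis using True F_empty by simp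
  next
    case False
    obtain A where A: "atom A" "A \<subseteq> W" using atom_below[OF psubset.prems False] .
    have disj: "(W - A) \<inter> A = {}" by blast
    have W_eq: "W - A \<union> A = W" using A(2) by blast
    have FW: "F W = - F (W - A)"
      using mobius_add_atom[OF A(1) disj] W_eq
      by (simp only:)
    show ?thesis
    proof (cases "W - A \<in> M")
      case False
      moreover have "A \<in> M" using A(1) unfolding atom_def by blast
      ultimately have "\<not> boolean_below W" using A(2) unfolding boolean_below_def by blast
      then show ?thesis using FW F_off[OF False] by simp
    next
      case True
      have "W - A \<subset> W" using A unfolding atom_def by blast
      then have "F (W - A) = (if boolean_below (W - A) then (-1) ^ rank_below (W - A) else 0)"
        using True by (rule psubset.IH)
      then show ?thesis
        using FW boolean_below_remove_atom[OF A True] rank_below_remove_atom[OF A True] by simp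
    qed
  qed
qed

end

end

section \<open>Ordered set partitions and chain sums\<close>

lemma ordered_set_partitions_Nil_iff: "[] \<in> ordered_set_partitions W \<longleftrightarrow> W = {}"
  unfolding ordered_set_partitions_def by auto

lemma ordered_set_partitions_Cons_iff:
  "S # Ss \<in> ordered_set_partitions W \<longleftrightarrow>
     S \<noteq> {} \<and> S \<subseteq> W \<and> Ss \<in> ordered_set_partitions (W - S)"
proof -
  have "(\<forall>i<length (S # Ss). \<forall>j<length (S # Ss). i \<noteq> j \<longrightarrow> (S # Ss) ! i \<inter> (S # Ss) ! j = {})
    \<longleftrightarrow> (\<forall>j<length Ss. S \<inter> Ss ! j = {}) \<and>
        (\<forall>i<length Ss. \<forall>j<length Ss. i \<noteq> j \<longrightarrow> Ss ! i \<inter> Ss ! j = {})"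
    by (simp add: All_less_Suc2 Int_commute) blast
  also have "(\<forall>j<length Ss. S \<inter> Ss ! j = {}) \<longleftrightarrow> S \<inter> \<Union>(set Ss) = {}"
    by (fastforce simp: in_set_conv_nth)
  finally show ?thesis
    unfolding ordered_set_partitions_def by auto
qed

lemma distinct_ordered_set_partition:
  assumes "Ss \<in> ordered_set_partitions W"
  shows "distinct Ss"
proof -
  have "Ss ! i \<noteq> Ss ! j" if ij: "i < length Ss" "j < length Ss" "i \<noteq> j" for i j
  proof
    assume "Ss ! i = Ss ! j"
    moreover have "Ss ! i \<inter> Ss ! j = {}"
      using assms ij unfolding ordered_set_partitions_def by blast
    ultimately have "Ss ! i = {}" by simp
    moreover have "Ss ! i \<in> set Ss" using ij by simp
    ultimately show False
      using assms unfolding ordered_set_partitions_def by blast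
  qed
  then show ?thesis by (simp add: distinct_conv_nth)
qed

lemma finite_ordered_set_partitions:
  assumes "finite W"
  shows "finite (ordered_set_partitions W)"
proof (rule finite_subset)
  show "ordered_set_partitions W \<subseteq> {Ss. set Ss \<subseteq> Pow W \<and> distinct Ss}"
    using distinct_ordered_set_partition unfolding ordered_set_partitions_def by blast
  show "finite {Ss. set Ss \<subseteq> Pow W \<and> distinct Ss}"
    using assms by (intro finite_subset_distinct) simp
qed

lemma ordered_set_partitions_hd_tl:
  assumes "W \<noteq> {}"
  shows "Ss \<in> ordered_set_partitions W \<longleftrightarrow>
    Ss \<noteq> [] \<and> hd Ss \<subseteq> W \<and> hd Ss \<noteq> {} \<and> tl Ss \<in> ordered_set_partitions (W - hd Ss)"
  using assms
  by (cases Ss) (auto simp: ordered_set_partitions_Nil_iff ordered_set_partitions_Cons_iff)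

lemma sum_ordered_set_partitions_Cons:
  assumes "finite W" "W \<noteq> {}"
  shows "(\<Sum>Ss\<in>ordered_set_partitions W. g Ss) =
    (\<Sum>S | S \<subseteq> W \<and> S \<noteq> {}. \<Sum>Ss\<in>ordered_set_partitions (W - S). g (S # Ss))"
proof -
  let ?A = "SIGMA S:{S. S \<subseteq> W \<and> S \<noteq> {}}. ordered_set_partitions (W - S)"
  have "(\<Sum>Ss\<in>ordered_set_partitions W. g Ss) = (\<Sum>(S, Ss)\<in>?A. g (S # Ss))"
    by (rule sum.reindex_bij_witness[where i="\<lambda>(S, Ss). S # Ss" and j="\<lambda>Ss. (hd Ss, tl Ss)"])
      (auto simp: ordered_set_partitions_hd_tl[OF assms(2)])
  also have "\<dots> = (\<Sum>S | S \<subseteq> W \<and> S \<noteq> {}. \<Sum>Ss\<in>ordered_set_partitions (W - S). g (S # Ss))"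
    using assms(1) by (intro sum.Sigma[symmetric]) (auto intro: finite_ordered_set_partitions)
  finally show ?thesis .
qed

lemma ordered_set_partitions_appendD:
  "Ts @ Ss \<in> ordered_set_partitions W \<Longrightarrow> Ss \<in> ordered_set_partitions (W - \<Union>(set Ts))"
proof (induction Ts arbitrary: W)
  case (Cons T Ts)
  then have "Ss \<in> ordered_set_partitions (W - T - \<Union>(set Ts))"
    by (simp add: ordered_set_partitions_Cons_iff)
  moreover have "W - T - \<Union>(set Ts) = W - \<Union>(set (T # Ts))" by auto
  ultimately show ?case by simp
qed simp

lemma ordered_set_partitions_take_drop:
  assumes "Ss \<in> ordered_set_partitions W"
  shows "\<Union>(set (drop k Ss)) = W - \<Union>(set (take k Ss))"
proof -
  have "drop k Ss \<in> ordered_set_partitions (W - \<Union>(set (take k Ss)))"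
    using assms by (intro ordered_set_partitions_appendD) simp
  then show ?thesis unfolding ordered_set_partitions_def by blast
qed

lemma ordered_set_partitions_empty: "ordered_set_partitions {} = {[]}"
proof -
  have "Ss \<in> ordered_set_partitions {} \<longleftrightarrow> Ss = []" for Ss :: "'a set list"
    by (cases Ss) (auto simp: ordered_set_partitions_Nil_iff ordered_set_partitions_Cons_iff)
  then show ?thesis by blast
qed

text \<open>The unions of the final segments of a partition of \<open>W\<close> form a chain
  \<open>W \<supset> \<dots> \<supset> {}\<close>, so this is Philip Hall's alternating count of chains in \<open>M\<close>,
  i.e. the Moebius function \<open>\<mu>({}, W)\<close> of \<open>M\<close>.\<close>
definition chain_sum :: "'a set set \<Rightarrow> 'a set \<Rightarrow> int" where
  "chain_sum M W = (\<Sum>Ss\<in>ordered_set_partitions W.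
     (-1) ^ length Ss * of_bool (\<forall>j<length Ss. \<Union>(set (drop j Ss)) \<in> M))"

lemma chain_sum_empty: "chain_sum M {} = 1"
  by (simp add: chain_sum_def ordered_set_partitions_empty)

lemma chain_sum_rec:
  assumes "finite W" "W \<noteq> {}"
  shows "chain_sum M W =
    (if W \<in> M then - (\<Sum>S | S \<subseteq> W \<and> S \<noteq> {}. chain_sum M (W - S)) else 0)"
proof -
  define g :: "'a set list \<Rightarrow> int"
    where "g Ss = (-1) ^ length Ss * of_bool (\<forall>j<length Ss. \<Union>(set (drop j Ss)) \<in> M)" for Ss
  have g_Cons: "g (S # Ss) = (if W \<in> M then - g Ss else 0)"
    if "S # Ss \<in> ordered_set_partitions W" for S Ss
  proof -
    have "\<Union>(set (S # Ss)) = W" using that unfolding ordered_set_partitions_def by blast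
    then show ?thesis by (auto simp: g_def All_less_Suc2)
  qed
  have "chain_sum M W = (\<Sum>S | S \<subseteq> W \<and> S \<noteq> {}. \<Sum>Ss\<in>ordered_set_partitions (W - S). g (S # Ss))"
    unfolding chain_sum_def g_def[symmetric] by (rule sum_ordered_set_partitions_Cons[OF assms])
  also have "\<dots> = (\<Sum>S | S \<subseteq> W \<and> S \<noteq> {}. \<Sum>Ss\<in>ordered_set_partitions (W - S).
      if W \<in> M then - g Ss else 0)"
    by (intro sum.cong refl) (simp add: g_Cons ordered_set_partitions_Cons_iff)
  also have "\<dots> = (if W \<in> M then - (\<Sum>S | S \<subseteq> W \<and> S \<noteq> {}. chain_sum M (W - S)) else 0)"
    by (simp add: chain_sum_def g_def sum_negf)
  finally show ?thesis .
qed

lemma chain_sum_not_mem: "finite W \<Longrightarrow> W \<noteq> {} \<Longrightarrow> W \<notin> M \<Longrightarrow> chain_sum M W = 0"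
  by (simp add: chain_sum_rec)

lemma sum_chain_sum_Pow:
  assumes "finite W" "W \<noteq> {}" "W \<in> M"
  shows "(\<Sum>V\<in>Pow W. chain_sum M V) = 0"
proof -
  have "(\<Sum>S | S \<subseteq> W \<and> S \<noteq> {}. chain_sum M (W - S)) = (\<Sum>V\<in>Pow W - {W}. chain_sum M V)"
    by (rule sum.reindex_bij_witness[of _ "\<lambda>V. W - V" "\<lambda>S. W - S"]) auto
  moreover have "(\<Sum>V\<in>Pow W. chain_sum M V) = chain_sum M W + (\<Sum>V\<in>Pow W - {W}. chain_sum M V)"
    using assms(1) by (simp add: sum.remove[of "Pow W" W])
  ultimately show ?thesis
    using chain_sum_rec[OF assms(1,2), of M] assms(3) by simp
qed

lemma (in set_lattice) chain_sum_eq: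
  assumes "W \<in> M"
  shows "chain_sum M W = (if boolean_below W then (-1) ^ rank_below W else 0)"
proof (rule mobius_closed_form[where F="chain_sum M", OF _ _ chain_sum_empty assms])
  show "chain_sum M V = 0" if "V \<notin> M" for V
    using that empty_mem by (intro chain_sum_not_mem) auto
  show "(\<Sum>V\<in>Pow U. chain_sum M V) = 0" if "U \<in> M" "U \<noteq> {}" for U
    using that by (intro sum_chain_sum_Pow) auto
qed

section \<open>Affine geometry\<close>

lemma rel_interior_maximizer_constant:
  fixes a :: "'a::euclidean_space"
  assumes y: "y \<in> rel_interior P" and max: "\<forall>x\<in>P. a \<bullet> x \<le> a \<bullet> y" and x: "x \<in> P"
  shows "a \<bullet> x = a \<bullet> y"
proof (cases "x = y")
  case False
  obtain e where e: "e > 0" "ball y e \<inter> affine hull P \<subseteq> P"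
    using y unfolding mem_rel_interior_ball by blast
  define t where "t = e / (2 * norm (y - x))"
  have t: "t > 0" using e False by (simp add: t_def)
  define w where "w = y + t *\<^sub>R (y - x)"
  have "y \<in> P" using y rel_interior_subset by blast
  then have "w \<in> affine hull P"
    unfolding w_def using x by (intro mem_affine_3_minus affine_affine_hull hull_inc)
  moreover have "dist y w = e / 2"
  proof -
    have "y - w = t *\<^sub>R (x - y)" by (simp add: w_def algebra_simps)
    then show ?thesis using e(1) False by (simp add: dist_norm t_def norm_minus_commute)
  qed
  ultimately have "w \<in> P" using e by auto
  then have "a \<bullet> w \<le> a \<bullet> y" using max by blast
  moreover have "a \<bullet> w = (1 + t) * (a \<bullet> y) - t * (a \<bullet> x)"
    by (simp add: w_def inner_add_right inner_diff_right algebra_simps)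
  ultimately have "a \<bullet> y \<le> a \<bullet> x" using t by (simp add: algebra_simps)
  with max x show ?thesis by (simp add: order_antisym)
qed simp

lemma aff_dim_inner_level_set:
  fixes G :: "'a::euclidean_space set"
  shows "aff_dim {x. \<forall>g\<in>G. g \<bullet> x = g \<bullet> y} = int DIM('a) - int (dim G)"
proof -
  let ?V = "{x. \<forall>g\<in>span G. orthogonal g x}"
  have V: "?V = {x. \<forall>g\<in>G. g \<bullet> x = 0}"
  proof (intro Collect_cong iffI ballI)
    fix x g assume "\<forall>g\<in>span G. orthogonal g x" "g \<in> G"
    then show "g \<bullet> x = 0" using span_base unfolding orthogonal_def by blast
  next
    fix x g assume "\<forall>g\<in>G. g \<bullet> x = 0" "g \<in> span G"
    then show "orthogonal g x"
      using orthogonal_to_span[of g G x] by (simp add: orthogonal_def inner_commute)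
  qed
  have "{x. \<forall>g\<in>G. g \<bullet> x = g \<bullet> y} = (+) y ` ?V"
    unfolding V
  proof (intro set_eqI iffI)
    fix x assume "x \<in> {x. \<forall>g\<in>G. g \<bullet> x = g \<bullet> y}"
    then show "x \<in> (+) y ` {x. \<forall>g\<in>G. g \<bullet> x = 0}"
      by (intro image_eqI[of _ _ "x - y"]) (auto simp: inner_diff_right)
  qed (auto simp: inner_add_right)
  then have "aff_dim {x. \<forall>g\<in>G. g \<bullet> x = g \<bullet> y} = dim ?V"
    by (simp add: aff_dim_translation_eq aff_dim_subspace subspace_orthogonal_to_vectors)
  moreover have "dim ?V + dim (span G) = DIM('a)"
    using dim_subspace_orthogonal_to_vectors[of "span G" UNIV] by (simp add: subspace_span)
  ultimately show ?thesis by (simp add: dim_span)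
qed

lemma affine_inner_level_set: "affine {x. \<forall>g\<in>G. g \<bullet> x = g \<bullet> y}"
  unfolding affine_def
proof (intro ballI allI impI)
  fix a b and u v :: real
  assume a: "a \<in> {x. \<forall>g\<in>G. g \<bullet> x = g \<bullet> y}" and b: "b \<in> {x. \<forall>g\<in>G. g \<bullet> x = g \<bullet> y}"
    and uv: "u + v = 1"
  have "g \<bullet> (u *\<^sub>R a + v *\<^sub>R b) = g \<bullet> y" if "g \<in> G" for g
  proof -
    have "g \<bullet> a = g \<bullet> y" "g \<bullet> b = g \<bullet> y" using a b that by blast+
    then have "g \<bullet> (u *\<^sub>R a + v *\<^sub>R b) = (u + v) * (g \<bullet> y)"
      by (simp add: inner_add_right distrib_right)
    with uv show ?thesis by simp
  qed
  then show "u *\<^sub>R a + v *\<^sub>R b \<in> {x. \<forall>g\<in>G. g \<bullet> x = g \<bullet> y}" by blast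
qed

lemma rel_interior_aff_dim_if_ball:
  fixes A :: "'a::euclidean_space set"
  assumes PA: "P \<subseteq> A" and A: "affine A" and y: "y \<in> P" and e: "e > 0"
    and ball: "ball y e \<inter> A \<subseteq> P"
  shows "y \<in> rel_interior P \<and> aff_dim P = aff_dim A"
proof
  have "affine hull P \<subseteq> A" using PA A by (rule hull_minimal)
  then show "y \<in> rel_interior P"
    unfolding mem_rel_interior_ball using y e ball by blast
  show "aff_dim P = aff_dim A"
  proof (rule order_antisym)
    show "aff_dim P \<le> aff_dim A" using PA by (rule aff_dim_subset)
    have "y \<in> A \<inter> ball y e" using y PA e by auto
    then have "aff_dim A = aff_dim (A \<inter> ball y e)"
      using A by (intro aff_dim_convex_Int_open[symmetric] affine_imp_convex) auto
    also have "\<dots> \<le> aff_dim P" using ball by (intro aff_dim_subset) blast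
    finally show "aff_dim A \<le> aff_dim P" .
  qed
qed

section \<open>Extended generalized permutahedra and their faces\<close>

definition coord_sum :: "'n::finite set \<Rightarrow> real^'n \<Rightarrow> real" where
  "coord_sum S x = (\<Sum>i\<in>S. x $ i)"

lemma coord_sum_eq_inner: "coord_sum S x = indicator_vec S \<bullet> x"
  unfolding coord_sum_def indicator_vec_def inner_vec_def
  by (simp add: indicator_def if_distrib[of "\<lambda>a. a * _"] sum.If_cases)

lemma coord_sum_empty [simp]: "coord_sum {} x = 0"
  by (simp add: coord_sum_def)

lemma coord_sum_Un_Int: "coord_sum (A \<union> B) x + coord_sum (A \<inter> B) x = coord_sum A x + coord_sum B x"
  unfolding coord_sum_def by (rule sum.union_inter) simp_all

lemma coord_sum_Un_disjoint: "A \<inter> B = {} \<Longrightarrow> coord_sum (A \<union> B) x = coord_sum A x + coord_sum B x"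
  using coord_sum_Un_Int[of A B x] by simp

lemma coord_sum_Compl: "coord_sum (- S) x = coord_sum UNIV x - coord_sum S x"
  using coord_sum_Un_disjoint[of S "- S" x] by (simp add: Un_commute)

definition shift :: "real^'n::finite \<Rightarrow> 'n \<Rightarrow> 'n \<Rightarrow> real \<Rightarrow> real^'n" where
  "shift x i j e = x + e *\<^sub>R (axis i 1 - axis j 1)"

lemma coord_sum_axis: "coord_sum T (axis i 1) = (if i \<in> T then 1 else 0)"
  by (simp add: coord_sum_def axis_def)

lemma coord_sum_shift:
  "coord_sum T (shift x i j e) = coord_sum T x + (if i \<in> T then e else 0) - (if j \<in> T then e else 0)"
proof -
  have "coord_sum T (shift x i j e) = coord_sum T x + e * (coord_sum T (axis i 1) - coord_sum T (axis j 1))"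
    by (simp add: coord_sum_eq_inner shift_def inner_add_right inner_diff_right)
  then show ?thesis
    by (simp add: coord_sum_axis)
qed

lemma dist_shift: "dist x (shift x i j e) \<le> 2 * \<bar>e\<bar>" for x :: "real^'n::finite"
proof -
  have "norm (axis i 1 - axis j 1 :: real^'n) \<le> 2"
    using norm_triangle_ineq4[of "axis i (1::real)" "axis j 1"] by simp
  then show ?thesis
    by (simp add: shift_def dist_norm mult.commute mult_left_mono)
qed

lemma max_face_eq_argmax:
  "max_face S F = {x\<in>F. \<forall>y\<in>F. coord_sum S y \<le> coord_sum S x}"
  unfolding max_face_def coord_sum_def[abs_def] by (auto simp: bdd_above_def)

lemma lex_face_subset: "lex_face Ss F \<subseteq> F"
proof (induction Ss arbitrary: F)
  case (Cons S Ss)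
  then show ?case
    using Cons.IH[of "max_face S F"] by (auto simp: max_face_eq_argmax)
qed simp

locale ext_generalized_permutahedron =
  fixes z :: "'n::finite set \<Rightarrow> ereal" and P :: "(real^'n) set"
  assumes submodular: "ext_submodular z" and P_eq: "P = GP_of z"
begin

lemma z_not_MInfty: "z A \<noteq> -\<infinity>"
  using submodular unfolding ext_submodular_def by blast

lemma z_submodular: "z (A \<union> B) + z (A \<inter> B) \<le> z A + z B"
  using submodular unfolding ext_submodular_def by blast

lemma mem_P: "x \<in> P \<longleftrightarrow> ereal (coord_sum UNIV x) = z UNIV \<and> (\<forall>A. ereal (coord_sum A x) \<le> z A)"
  unfolding P_eq GP_of_def coord_sum_def by simp

lemma coord_sum_UNIV_eq: "x \<in> P \<Longrightarrow> y \<in> P \<Longrightarrow> coord_sum UNIV x = coord_sum UNIV y"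
  using mem_P by (metis ereal.inject)

definition tight :: "real^'n \<Rightarrow> 'n set \<Rightarrow> bool" where
  "tight x S \<longleftrightarrow> ereal (coord_sum S x) = z S"

definition maximizes :: "real^'n \<Rightarrow> 'n set \<Rightarrow> bool" where
  "maximizes x S \<longleftrightarrow> (\<forall>y\<in>P. coord_sum S y \<le> coord_sum S x)"

lemma tight_Un_Int:
  assumes x: "x \<in> P" and A: "tight x A" and B: "tight x B"
  shows "tight x (A \<union> B) \<and> tight x (A \<inter> B)"
proof -
  let ?a = "coord_sum (A \<union> B) x" and ?b = "coord_sum (A \<inter> B) x"
  have "z A + z B = ereal (coord_sum A x + coord_sum B x)"
    using A B unfolding tight_def by (metis plus_ereal.simps(1))
  then have "z (A \<union> B) + z (A \<inter> B) \<le> ereal (?a + ?b)"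
    using z_submodular[of A B] coord_sum_Un_Int[of A B x] by simp
  moreover have le: "ereal ?a \<le> z (A \<union> B)" "ereal ?b \<le> z (A \<inter> B)"
    using x mem_P by blast+
  moreover obtain p q where "z (A \<union> B) = ereal p" "z (A \<inter> B) = ereal q"
    using calculation z_not_MInfty[of "A \<union> B"] z_not_MInfty[of "A \<inter> B"]
    by (cases "z (A \<union> B)"; cases "z (A \<inter> B)") auto
  ultimately show ?thesis
    unfolding tight_def by auto
qed

lemma tight_Union_Inter:
  assumes x: "x \<in> P" and K: "finite K" "K \<noteq> {}" and T: "\<forall>k\<in>K. tight x (T k)"
  shows "tight x (\<Union>k\<in>K. T k) \<and> tight x (\<Inter>k\<in>K. T k)"
  using K T
proof (induction K rule: finite_ne_induct)
  case (insert a F)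
  then show ?case using tight_Un_Int[OF x] by simp
qed simp

text \<open>Only the tight constraints can fail near a point of \<open>P\<close>: the finitely many
  others have slack.\<close>
lemma mem_P_near:
  assumes x: "x \<in> P"
  obtains e where "e > 0"
    and "\<And>y. dist x y < e \<Longrightarrow> coord_sum UNIV y = coord_sum UNIV x \<Longrightarrow>
           (\<And>T. tight x T \<Longrightarrow> coord_sum T y \<le> coord_sum T x) \<Longrightarrow> y \<in> P"
proof -
  let ?Ts = "{T. \<not> tight x T \<and> z T \<noteq> \<infinity>}"
  let ?U = "\<Inter>T\<in>?Ts. {y. indicator_vec T \<bullet> y < real_of_ereal (z T)}"
  have "open ?U"
    by (intro open_INT finite) (simp add: open_halfspace_lt)
  moreover have "x \<in> ?U"
  proof (clarify)
    fix T assume T: "\<not> tight x T" "z T \<noteq> \<infinity>"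
    then obtain r where r: "z T = ereal r" using z_not_MInfty[of T] by (cases "z T") auto
    have "ereal (coord_sum T x) \<le> z T" using x mem_P by blast
    with T r show "indicator_vec T \<bullet> x < real_of_ereal (z T)"
      unfolding tight_def coord_sum_eq_inner by auto
  qed
  ultimately obtain e where e: "e > 0" "ball x e \<subseteq> ?U"
    by (rule openE)
  show thesis
  proof (rule that[OF e(1)])
    fix y assume y: "dist x y < e" "coord_sum UNIV y = coord_sum UNIV x"
      and tight_le: "\<And>T. tight x T \<Longrightarrow> coord_sum T y \<le> coord_sum T x"
    have "ereal (coord_sum T y) \<le> z T" for T
    proof (cases "tight x T")
      case True
      then show ?thesis using tight_le[OF True] unfolding tight_def by (metis ereal_less_eq(3))
    next
      case False
      show ?thesis
      proof (cases "z T = \<infinity>")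
        case False': False
        then obtain r where r: "z T = ereal r" using z_not_MInfty[of T] by (cases "z T") auto
        have "y \<in> ?U" using e y(1) by auto
        then show ?thesis using False False' r unfolding coord_sum_eq_inner by auto
      qed simp
    qed
    then show "y \<in> P" using y(2) x unfolding mem_P by simp
  qed
qed

lemma exchange:
  assumes x: "x \<in> P" and ij: "i \<noteq> j" and ij_tight: "\<And>T. tight x T \<Longrightarrow> i \<in> T \<Longrightarrow> j \<in> T"
  obtains e where "e > 0" "shift x i j e \<in> P"
proof -
  obtain d where d: "d > 0" and near: "\<And>y. dist x y < d \<Longrightarrow> coord_sum UNIV y = coord_sum UNIV x \<Longrightarrow>
           (\<And>T. tight x T \<Longrightarrow> coord_sum T y \<le> coord_sum T x) \<Longrightarrow> y \<in> P"
    using mem_P_near[OF x] by blast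
  have shifted: "shift x i j (d / 4) \<in> P"
  proof (rule near)
    show "dist x (shift x i j (d / 4)) < d"
      using dist_shift[of x i j "d / 4"] d by simp
    show "coord_sum UNIV (shift x i j (d / 4)) = coord_sum UNIV x"
      by (simp add: coord_sum_shift)
    show "coord_sum T (shift x i j (d / 4)) \<le> coord_sum T x" if "tight x T" for T
      using ij_tight[OF that] d by (auto simp: coord_sum_shift)
  qed
  show thesis
    by (rule that[OF _ shifted]) (use d in simp)
qed

lemma uncross:
  assumes x: "x \<in> P" and S: "S \<noteq> {}" and R: "R \<noteq> {}"
    and sep: "\<And>i j. i \<in> S \<Longrightarrow> j \<in> R \<Longrightarrow> \<exists>T. tight x T \<and> i \<in> T \<and> j \<notin> T"
  obtains W where "tight x W" "S \<subseteq> W" "W \<inter> R = {}"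
proof -
  obtain Tf where Tf: "\<And>i j. i \<in> S \<Longrightarrow> j \<in> R \<Longrightarrow> tight x (Tf i j) \<and> i \<in> Tf i j \<and> j \<notin> Tf i j"
    using sep by metis
  let ?W = "\<Union>i\<in>S. \<Inter>j\<in>R. Tf i j"
  have "tight x (\<Inter>j\<in>R. Tf i j)" if "i \<in> S" for i
    using tight_Union_Inter[OF x finite R, of "Tf i"] Tf that by blast
  then have "tight x ?W"
    using tight_Union_Inter[OF x finite S, of "\<lambda>i. \<Inter>j\<in>R. Tf i j"] by blast
  moreover have "S \<subseteq> ?W" "?W \<inter> R = {}" using Tf R by blast+
  ultimately show thesis using that by blast
qed

lemma maximizes_empty: "maximizes x {}"
  by (simp add: maximizes_def)

lemma maximizes_UNIV: "x \<in> P \<Longrightarrow> maximizes x UNIV"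
  unfolding maximizes_def using coord_sum_UNIV_eq by (metis order_refl)

lemma maximizes_if_tight:
  assumes "tight x S"
  shows "maximizes x S"
  unfolding maximizes_def
proof
  fix y assume "y \<in> P"
  then have "ereal (coord_sum S y) \<le> ereal (coord_sum S x)"
    using assms unfolding mem_P tight_def by simp
  then show "coord_sum S y \<le> coord_sum S x" by simp
qed

lemma maximizes_iff_tight:
  assumes x: "x \<in> P"
  shows "maximizes x S \<longleftrightarrow> S = {} \<or> S = UNIV \<or> tight x S"
proof
  assume max: "maximizes x S"
  show "S = {} \<or> S = UNIV \<or> tight x S"
  proof (rule ccontr)
    assume c: "\<not> (S = {} \<or> S = UNIV \<or> tight x S)"
    show False
    proof (cases "\<forall>i\<in>S. \<forall>j\<in>- S. \<exists>T. tight x T \<and> i \<in> T \<and> j \<notin> T")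
      case True
      then obtain W where "tight x W" "S \<subseteq> W" "W \<inter> - S = {}"
        using uncross[OF x, of S "- S"] c by auto
      moreover from calculation have "W = S" by blast
      ultimately show False using c by blast
    next
      case False
      then obtain i j where ij: "i \<in> S" "j \<notin> S"
        and ij_tight: "\<And>T. tight x T \<Longrightarrow> i \<in> T \<Longrightarrow> j \<in> T" by blast
      moreover have "i \<noteq> j" using ij by blast
      ultimately obtain e where "e > 0" "shift x i j e \<in> P"
        using exchange[OF x] by blast
      moreover have "coord_sum S (shift x i j e) = coord_sum S x + e"
        using ij by (simp add: coord_sum_shift)
      ultimately show False using max unfolding maximizes_def by fastforce
    qed
  qed
next
  show "S = {} \<or> S = UNIV \<or> tight x S \<Longrightarrow> maximizes x S"
    using maximizes_empty maximizes_UNIV[OF x] maximizes_if_tight by blast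
qed

lemma maximizes_Un_Int:
  assumes x: "x \<in> P" and A: "maximizes x A" and B: "maximizes x B"
  shows "maximizes x (A \<union> B) \<and> maximizes x (A \<inter> B)"
proof (cases "A = {} \<or> A = UNIV \<or> B = {} \<or> B = UNIV")
  case True
  then show ?thesis using A B maximizes_empty maximizes_UNIV[OF x] by auto
next
  case False
  then have "tight x A" "tight x B" using A B maximizes_iff_tight[OF x] by auto
  then show ?thesis using tight_Un_Int[OF x] maximizes_if_tight by blast
qed

lemma maximizes_cong: "maximizes y C \<Longrightarrow> coord_sum C y' = coord_sum C y \<Longrightarrow> maximizes y' C"
  by (simp add: maximizes_def)

definition common_max_face :: "'n set set \<Rightarrow> (real^'n) set" where
  "common_max_face Cs = {y\<in>P. \<forall>C\<in>Cs. maximizes y C}"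

text \<open>Either tight sets separate \<open>S\<close> from the complement of \<open>U \<union> S\<close>, and uncrossing makes
  \<open>U \<union> S\<close> tight, or moving mass from some \<open>j \<notin> U \<union> S\<close> to some \<open>i \<in> S\<close> stays in the face.\<close>
lemma exists_larger_coord_sum:
  assumes CU: "\<forall>C\<in>Cs. C \<subseteq> U" and U: "U \<in> Cs" and S: "S \<noteq> {}" "S \<inter> U = {}"
    and y: "y \<in> common_max_face Cs" and not_max: "\<not> maximizes y (U \<union> S)"
  obtains y' where "y' \<in> common_max_face Cs" "coord_sum S y < coord_sum S y'"
proof -
  have yP: "y \<in> P" and y_max: "\<And>C. C \<in> Cs \<Longrightarrow> maximizes y C"
    using y unfolding common_max_face_def by auto
  have R: "- (U \<union> S) \<noteq> {}"
  proof
    assume "- (U \<union> S) = {}"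
    then have "U \<union> S = UNIV" by blast
    then show False using not_max maximizes_UNIV[OF yP] by simp
  qed
  show thesis
  proof (cases "\<forall>i\<in>S. \<forall>j\<in>- (U \<union> S). \<exists>T. tight y T \<and> i \<in> T \<and> j \<notin> T")
    case True
    then obtain W where W: "tight y W" "S \<subseteq> W" "W \<inter> - (U \<union> S) = {}"
      using uncross[OF yP S(1) R] by blast
    have "tight y (W \<union> U)"
    proof (cases "U = {}")
      case False
      moreover have "U \<noteq> UNIV" using S by blast
      ultimately have "tight y U" using y_max[OF U] maximizes_iff_tight[OF yP] by blast
      then show ?thesis using tight_Un_Int[OF yP W(1)] by blast
    qed (simp add: W(1))
    moreover have "W \<union> U = U \<union> S" using W by blast
    ultimately show thesis using not_max maximizes_if_tight by auto
  next
    case False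
    then obtain i j where ij: "i \<in> S" "j \<notin> U \<union> S"
      and ij_tight: "\<And>T. tight y T \<Longrightarrow> i \<in> T \<Longrightarrow> j \<in> T" by blast
    moreover have "i \<noteq> j" using ij by blast
    ultimately obtain e where e: "e > 0" "shift y i j e \<in> P"
      using exchange[OF yP] by blast
    have "maximizes (shift y i j e) C" if "C \<in> Cs" for C
    proof (rule maximizes_cong[OF y_max[OF that]])
      have "i \<notin> C" "j \<notin> C" using that CU ij S(2) by auto
      then show "coord_sum C (shift y i j e) = coord_sum C y" by (simp add: coord_sum_shift)
    qed
    then have "shift y i j e \<in> common_max_face Cs"
      using e(2) unfolding common_max_face_def by blast
    moreover have "coord_sum S y < coord_sum S (shift y i j e)"
      using ij e(1) by (simp add: coord_sum_shift)
    ultimately show thesis by (rule that)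
  qed
qed

lemma max_face_common_max_face:
  assumes CU: "\<forall>C\<in>Cs. C \<subseteq> U" and U: "U \<in> Cs" and S: "S \<noteq> {}" "S \<inter> U = {}"
  shows "max_face S (common_max_face Cs) = common_max_face (insert (U \<union> S) Cs)"
proof -
  let ?F = "common_max_face Cs"
  have U_eq: "coord_sum U y = coord_sum U y'" if "y \<in> ?F" "y' \<in> ?F" for y y'
  proof -
    have "y \<in> P" "y' \<in> P" "maximizes y U" "maximizes y' U"
      using that U unfolding common_max_face_def by auto
    then show ?thesis unfolding maximizes_def by (meson order_antisym)
  qed
  have split: "coord_sum (U \<union> S) y = coord_sum U y + coord_sum S y" for y
    using S(2) by (simp add: coord_sum_Un_disjoint Int_commute)
  have "y \<in> max_face S ?F \<longleftrightarrow> y \<in> common_max_face (insert (U \<union> S) Cs)" for y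
  proof
    assume y: "y \<in> max_face S ?F"
    then have "y \<in> ?F" and y_max: "\<forall>y'\<in>?F. coord_sum S y' \<le> coord_sum S y"
      unfolding max_face_eq_argmax by auto
    moreover have "maximizes y (U \<union> S)"
    proof (rule ccontr)
      assume "\<not> maximizes y (U \<union> S)"
      then obtain y' where "y' \<in> ?F" "coord_sum S y < coord_sum S y'"
        using exists_larger_coord_sum[OF CU U S \<open>y \<in> ?F\<close>] by blast
      with y_max show False by fastforce
    qed
    ultimately show "y \<in> common_max_face (insert (U \<union> S) Cs)"
      unfolding common_max_face_def by blast
  next
    assume y: "y \<in> common_max_face (insert (U \<union> S) Cs)"
    then have yF: "y \<in> ?F" and "maximizes y (U \<union> S)"
      unfolding common_max_face_def by auto
    have "coord_sum S y' \<le> coord_sum S y" if y': "y' \<in> ?F" for y'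
    proof -
      have "y' \<in> P" using y' unfolding common_max_face_def by blast
      then have "coord_sum (U \<union> S) y' \<le> coord_sum (U \<union> S) y"
        using \<open>maximizes y (U \<union> S)\<close> unfolding maximizes_def by blast
      then show ?thesis
        using U_eq[OF yF y'] split[of y] split[of y'] by linarith
    qed
    then show "y \<in> max_face S ?F"
      using yF unfolding max_face_eq_argmax by blast
  qed
  then show ?thesis by blast
qed

definition prefix_unions :: "'n set list \<Rightarrow> 'n set set" where
  "prefix_unions Ss = (\<lambda>k. \<Union>(set (take k Ss))) ` {..length Ss}"

lemma prefix_unions_snoc: "prefix_unions (Ts @ [S]) = insert (\<Union>(set Ts) \<union> S) (prefix_unions Ts)"
proof -
  have "(\<lambda>k. \<Union>(set (take k (Ts @ [S])))) ` {..length Ts} = prefix_unions Ts"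
    unfolding prefix_unions_def by (intro image_cong) auto
  then show ?thesis
    unfolding prefix_unions_def by (simp add: atMost_Suc Un_commute)
qed

lemma lex_face_common_max_face:
  assumes "Ts @ Ss \<in> ordered_set_partitions UNIV"
  shows "lex_face Ss (common_max_face (prefix_unions Ts)) = common_max_face (prefix_unions (Ts @ Ss))"
  using assms
proof (induction Ss arbitrary: Ts)
  case (Cons S Ss)
  have "S # Ss \<in> ordered_set_partitions (UNIV - \<Union>(set Ts))"
    using ordered_set_partitions_appendD[OF Cons.prems] .
  then have S: "S \<noteq> {}" "S \<inter> \<Union>(set Ts) = {}"
    by (auto simp: ordered_set_partitions_Cons_iff)
  have "max_face S (common_max_face (prefix_unions Ts)) = common_max_face (prefix_unions (Ts @ [S]))"
  proof -
    have "\<forall>C\<in>prefix_unions Ts. C \<subseteq> \<Union>(set Ts)"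
      unfolding prefix_unions_def using set_take_subset by fastforce
    moreover have "\<Union>(set Ts) \<in> prefix_unions Ts"
      unfolding prefix_unions_def by (intro image_eqI[of _ _ "length Ts"]) auto
    ultimately show ?thesis
      using max_face_common_max_face[OF _ _ S] by (simp add: prefix_unions_snoc)
  qed
  moreover have "(Ts @ [S]) @ Ss \<in> ordered_set_partitions UNIV" using Cons.prems by simp
  ultimately show ?case
    using Cons.IH[of "Ts @ [S]"] by simp
qed simp

lemma lex_face_eq:
  assumes "Ss \<in> ordered_set_partitions UNIV"
  shows "lex_face Ss P = {y\<in>P. \<forall>k\<le>length Ss. maximizes y (\<Union>(set (take k Ss)))}"
proof -
  have "common_max_face (prefix_unions []) = P"
    by (simp add: common_max_face_def prefix_unions_def maximizes_empty)
  then show ?thesis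
    using lex_face_common_max_face[of "[]" Ss] assms
    by (auto simp: common_max_face_def prefix_unions_def)
qed

lemma set_lattice_maximized_complements:
  assumes y: "y \<in> P"
  shows "set_lattice {V. maximizes y (- V)}"
proof
  show "{} \<in> {V. maximizes y (- V)}" using maximizes_UNIV[OF y] by simp
  fix A B assume "A \<in> {V. maximizes y (- V)}" "B \<in> {V. maximizes y (- V)}"
  then have "maximizes y (- A \<union> - B) \<and> maximizes y (- A \<inter> - B)"
    using maximizes_Un_Int[OF y] by simp
  then show "A \<union> B \<in> {V. maximizes y (- V)}" "A \<inter> B \<in> {V. maximizes y (- V)}"
    by simp_all
qed

lemma GP_antipode_eq_chain_sum:
  assumes y: "y \<in> P"
  shows "GP_antipode P y = chain_sum {V. maximizes y (- V)} UNIV"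
  unfolding GP_antipode_def chain_sum_def
proof (rule sum.cong[OF refl])
  fix Ss :: "'n set list" assume Ss: "Ss \<in> ordered_set_partitions UNIV"
  have compl: "- \<Union>(set (drop k Ss)) = \<Union>(set (take k Ss))" for k
    using ordered_set_partitions_take_drop[OF Ss, of k] by auto
  have "maximizes y (\<Union>(set (take (length Ss) Ss)))"
    using Ss maximizes_UNIV[OF y] unfolding ordered_set_partitions_def by simp
  then have "y \<in> lex_face Ss P \<longleftrightarrow> (\<forall>j<length Ss. \<Union>(set (drop j Ss)) \<in> {V. maximizes y (- V)})"
    using y by (auto simp: lex_face_eq[OF Ss] compl le_less)
  then show "(-1) ^ length Ss * indicator (lex_face Ss P) y =
      (-1) ^ length Ss * of_bool (\<forall>j<length Ss. \<Union>(set (drop j Ss)) \<in> {V. maximizes y (- V)})"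
    by (simp add: indicator_def)
qed

lemma balanced_point_rel_interior:
  assumes y: "y \<in> P" and balanced: "\<And>S. maximizes y S \<Longrightarrow> maximizes y (- S)"
  shows "y \<in> rel_interior P"
    and "aff_dim P = int CARD('n) - int (dim (indicator_vec ` {S. maximizes y S}))"
proof -
  let ?G = "indicator_vec ` {S. maximizes y S}"
  let ?A = "{x. \<forall>g\<in>?G. g \<bullet> x = g \<bullet> y}"
  have level: "x \<in> ?A \<longleftrightarrow> (\<forall>S. maximizes y S \<longrightarrow> coord_sum S x = coord_sum S y)" for x
    by (auto simp: coord_sum_eq_inner)
  have "P \<subseteq> ?A"
  proof
    fix x assume x: "x \<in> P"
    have "coord_sum S x = coord_sum S y" if "maximizes y S" for S
    proof -
      have "coord_sum S x \<le> coord_sum S y" "coord_sum (- S) x \<le> coord_sum (- S) y"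
        using x that balanced[OF that] unfolding maximizes_def by blast+
      then show ?thesis
        using coord_sum_UNIV_eq[OF x y] unfolding coord_sum_Compl by linarith
    qed
    then show "x \<in> ?A" using level by blast
  qed
  obtain e where e: "e > 0"
    and near: "\<And>x. dist y x < e \<Longrightarrow> coord_sum UNIV x = coord_sum UNIV y \<Longrightarrow>
                 (\<And>T. tight y T \<Longrightarrow> coord_sum T x \<le> coord_sum T y) \<Longrightarrow> x \<in> P"
    using mem_P_near[OF y] by blast
  have ball_A: "ball y e \<inter> ?A \<subseteq> P"
  proof
    fix x assume x: "x \<in> ball y e \<inter> ?A"
    then have eq: "\<And>S. maximizes y S \<Longrightarrow> coord_sum S x = coord_sum S y" using level by blast
    show "x \<in> P"
    proof (rule near)
      show "dist y x < e" using x by simp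
      show "coord_sum UNIV x = coord_sum UNIV y" using eq maximizes_UNIV[OF y] by blast
      show "coord_sum T x \<le> coord_sum T y" if "tight y T" for T
        using eq[OF maximizes_if_tight[OF that]] by simp
    qed
  qed
  have ri: "y \<in> rel_interior P \<and> aff_dim P = aff_dim ?A"
    using rel_interior_aff_dim_if_ball[OF \<open>P \<subseteq> ?A\<close> affine_inner_level_set y e ball_A] .
  then show "y \<in> rel_interior P" by blast
  show "aff_dim P = int CARD('n) - int (dim ?G)"
    using ri aff_dim_inner_level_set[of ?G y] by simp
qed

lemma unbalanced_point_not_rel_interior:
  assumes max: "maximizes y S" and not_max: "\<not> maximizes y (- S)"
  shows "y \<notin> rel_interior P"
proof
  assume y: "y \<in> rel_interior P"
  then have yP: "y \<in> P" using rel_interior_subset by blast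
  have "coord_sum (- S) x \<le> coord_sum (- S) y" if x: "x \<in> P" for x
  proof -
    have "coord_sum S x = coord_sum S y"
      using rel_interior_maximizer_constant[OF y _ x, of "indicator_vec S"] max
      unfolding maximizes_def coord_sum_eq_inner by blast
    then show ?thesis
      using coord_sum_UNIV_eq[OF x yP] unfolding coord_sum_Compl by simp
  qed
  with not_max show False unfolding maximizes_def by blast
qed

lemma GP_antipode_at:
  "GP_antipode P y = (-1) ^ nat (int CARD('n) - aff_dim P) * indicator (rel_interior P) y"
proof (cases "y \<in> P")
  case False
  then have "y \<notin> lex_face Ss P" for Ss using lex_face_subset by blast
  moreover have "y \<notin> rel_interior P" using False rel_interior_subset by blast
  ultimately show ?thesis by (simp add: GP_antipode_def)
next
  case y: True
  let ?M = "{V. maximizes y (- V)}"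
  interpret set_lattice ?M using set_lattice_maximized_complements[OF y] .
  have bool_iff: "boolean_below UNIV \<longleftrightarrow> (\<forall>S. maximizes y S \<longrightarrow> maximizes y (- S))"
    unfolding boolean_below_def by (simp add: Compl_eq_Diff_UNIV[symmetric]) (metis double_compl)
  have "GP_antipode P y = (if boolean_below UNIV then (-1) ^ rank_below UNIV else 0)"
    using GP_antipode_eq_chain_sum[OF y] chain_sum_eq[of UNIV] maximizes_empty by simp
  also have "\<dots> = (-1) ^ nat (int CARD('n) - aff_dim P) * indicator (rel_interior P) y"
  proof (cases "\<forall>S. maximizes y S \<longrightarrow> maximizes y (- S)")
    case True
    then have M_eq: "?M = {S. maximizes y S}" by (metis double_compl)
    have "rank_below UNIV = dim (indicator_vec ` {S. maximizes y S})"
      unfolding rank_below_def by (simp add: M_eq)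
    then show ?thesis
      using balanced_point_rel_interior[OF y] True bool_iff by simp
  next
    case False
    then show ?thesis using unbalanced_point_not_rel_interior bool_iff by auto
  qed
  finally show ?thesis .
qed

end

theorem mainTheorem2:
  fixes P :: "(real^'n::finite) set"
  assumes "is_ext_GP P"
  shows "GP_antipode P =
    (\<lambda>x. (-1) ^ nat (int CARD('n) - aff_dim P) * indicator (rel_interior P) x)"
proof -
  obtain z where "ext_submodular z" "P = GP_of z"
    using assms unfolding is_ext_GP_def by blast
  then interpret ext_generalized_permutahedron z P by unfold_locales
  show ?thesis using GP_antipode_at by blast
qed

end
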